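(* Let $\mathcal{Z}=\{z_1,\dots,z_n\}\subset\mathbb{R}^2$ be a finite set of points, let $d_{ij}$ denote the Euclidean distance between $z_i$ and $z_j$, and fix a cutoff distance $d_c>0$. Define the density of each point by $\rho_i=\sum_{j\neq i}\exp\!\left(-(d_{ij}/d_c)^2\right)$, and define $\delta_i=\min_{j:\rho_j>\rho_i} d_{ij}$ when some $j$ satisfies $\rho_j>\rho_i$, and $\delta_i=\max_{k,l} d_{kl}$ otherwise. Let $\bar{\rho}=\frac{1}{n}\sum_{j=1}^n\rho_j$. Call $z_i$ a local cluster center if $\delta_i>d_c$ and $\rho_i>\bar{\rho}$. If $z_i$ and $z_j$ are two local cluster centers with $\rho_i\neq\rho_j$, then $d_{ij}\ge d_c$. *)

theory Defs
  imports "HOL-Analysis.Analysis"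
begin

definition dp_rho :: "(real^2) set \<Rightarrow> real \<Rightarrow> real^2 \<Rightarrow> real" where
  "dp_rho Z dc z = (\<Sum>w\<in>Z - {z}. exp (- ((dist z w / dc)^2)))"

definition dp_delta :: "(real^2) set \<Rightarrow> real \<Rightarrow> real^2 \<Rightarrow> real" where
  "dp_delta Z dc z =
     (if \<exists>w\<in>Z. dp_rho Z dc w > dp_rho Z dc z
      then Min {dist z w | w. w \<in> Z \<and> dp_rho Z dc w > dp_rho Z dc z}
      else Max {dist k l | k l. k \<in> Z \<and> l \<in> Z})"

definition dp_rho_bar :: "(real^2) set \<Rightarrow> real \<Rightarrow> real" where
  "dp_rho_bar Z dc = (\<Sum>w\<in>Z. dp_rho Z dc w) / real (card Z)"

definition local_cluster_center :: "(real^2) set \<Rightarrow> real \<Rightarrow> real^2 \<Rightarrow> bool" where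
  "local_cluster_center Z dc z \<longleftrightarrow>
     z \<in> Z \<and> dp_delta Z dc z > dc \<and> dp_rho Z dc z > dp_rho_bar Z dc"

end

theory Submission
  imports Defs
begin

lemma dp_delta_le_dist_denser:
  assumes "finite Z" "w \<in> Z" "dp_rho Z dc z < dp_rho Z dc w"
  shows "dp_delta Z dc z \<le> dist z w"
proof -
  let ?S = "{dist z v | v. v \<in> Z \<and> dp_rho Z dc v > dp_rho Z dc z}"
  have "dp_delta Z dc z = Min ?S"
    using assms(2,3) unfolding dp_delta_def by auto
  also have "\<dots> \<le> dist z w"
    using assms by (intro Min_le) auto
  finally show ?thesis .
qed

lemma local_cluster_center_far_from_denser:
  assumes "finite Z" "local_cluster_center Z dc z" "w \<in> Z"
    and "dp_rho Z dc z < dp_rho Z dc w"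
  shows "dist z w > dc"
  using dp_delta_le_dist_denser[OF assms(1,3,4)] assms(2)
  unfolding local_cluster_center_def by linarith

theorem theorem2:
  fixes Z :: "(real^2) set" and dc :: real and zi zj :: "real^2"
  assumes "finite Z" and "dc > 0"
    and "local_cluster_center Z dc zi" and "local_cluster_center Z dc zj"
    and "dp_rho Z dc zi \<noteq> dp_rho Z dc zj"
  shows "dist zi zj \<ge> dc"
proof -
  have "zi \<in> Z" "zj \<in> Z"
    using assms(3,4) unfolding local_cluster_center_def by blast+
  consider "dp_rho Z dc zi < dp_rho Z dc zj" | "dp_rho Z dc zj < dp_rho Z dc zi"
    using assms(5) by linarith
  then have "dist zi zj > dc"
  proof cases
    case 1
    then show ?thesis
      using local_cluster_center_far_from_denser[OF assms(1,3) \<open>zj \<in> Z\<close>] by blast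
  next
    case 2
    then show ?thesis
      using local_cluster_center_far_from_denser[OF assms(1,4) \<open>zi \<in> Z\<close>]
      by (simp add: dist_commute)
  qed
  then show ?thesis by simp
qed

end
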